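(* Let $\mathbb{K}\in\{\mathbb{R},\mathbb{C}\}$, $\star\in\{*,T\}$, $\epsilon_1,\epsilon_2\in\{1,-1\}$, and let $Q(\lambda)=\lambda^2M+\lambda D+K\in\mathbb{K}^{n\times n}[\lambda]$ satisfy $M^\star=\epsilon_1M$, $D^\star=\epsilon_2D$, $K^\star=\epsilon_1K$. If $(X,\Lambda)\in\mathbb{K}^{n\times p}\times\mathbb{K}^{p\times p}$ is an invariant pair of $Q(\lambda)$ with $\sigma(\epsilon_1\epsilon_2\Lambda^\star)\cap\sigma(\Lambda)=\emptyset$, then $X^\star MX\Lambda+\epsilon_1\epsilon_2\Lambda^\star X^\star MX+X^\star DX=0$.
   Context: For a matrix $A$, $A^*$ is the conjugate transpose and $A^T$ the transpose; $A^\star$ means $A^*$ if $\star=*$ and $A^T$ if $\star=T$. $\sigma(A)$ is the spectrum. A pair $(X,\Lambda)$ is an invariant pair of $Q(\lambda)$ if $MX\Lambda^2+DX\Lambda+KX=0$. *)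

theory Defs
  imports "Jordan_Normal_Form.Spectral_Radius" "Jordan_Normal_Form.Schur_Decomposition"
begin

datatype star_kind = Adj | Tr

definition mat_star :: "star_kind \<Rightarrow> 'a :: conjugatable_field mat \<Rightarrow> 'a mat" where
  "mat_star s A = (case s of Adj \<Rightarrow> mat_adjoint A | Tr \<Rightarrow> transpose_mat A)"

definition invariant_pair :: "'a :: comm_ring_1 mat \<Rightarrow> 'a mat \<Rightarrow> 'a mat \<Rightarrow> 'a mat \<Rightarrow> 'a mat \<Rightarrow> bool" where
  "invariant_pair M D K X L \<longleftrightarrow> M * X * (L * L) + D * X * L + K * X = 0\<^sub>m (dim_row M) (dim_col L)"

end

theory Submission
  imports Defs
begin

text \<open>
  Put \<open>A = X\<^sup>\<star>MX\<close>, \<open>B = X\<^sup>\<star>DX\<close>, \<open>C = X\<^sup>\<star>KX\<close> and \<open>\<epsilon> = \<epsilon>\<^sub>1\<epsilon>\<^sub>2\<close>. Multiplying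
  \<open>MX\<Lambda>\<^sup>2 + DX\<Lambda> + KX = 0\<close> by \<open>X\<^sup>\<star>\<close> gives \<open>A\<Lambda>\<^sup>2 + B\<Lambda> + C = 0\<close>; applying \<open>\<star>\<close>
  and the symmetries of \<open>M, D, K\<close> gives \<open>\<Lambda>\<^sup>\<star>\<^sup>2A + \<epsilon>\<Lambda>\<^sup>\<star>B + C = 0\<close>. Subtracting
  the two shows that \<open>W = A\<Lambda> + \<epsilon>\<Lambda>\<^sup>\<star>A + B\<close> solves the homogeneous Sylvester equation
  \<open>W\<Lambda> = \<epsilon>\<Lambda>\<^sup>\<star>W\<close>. Its only solution is \<open>W = 0\<close> when the spectra are disjoint:
  after a Schur triangularisation of \<open>\<Lambda>\<close>, each column of the transformed \<open>W\<close> would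
  otherwise be an eigenvector of \<open>\<epsilon>\<Lambda>\<^sup>\<star>\<close> for an eigenvalue of \<open>\<Lambda>\<close>. Real matrices
  are handled by passing to their complexifications.
\<close>

definition scalar_star :: "star_kind \<Rightarrow> 'a :: conjugatable_field \<Rightarrow> 'a" where
  "scalar_star s = (case s of Adj \<Rightarrow> conjugate | Tr \<Rightarrow> id)"

lemma scalar_star_simps [simp]:
  "scalar_star s (a * b) = scalar_star s a * scalar_star s b"
  "scalar_star s (a + b) = scalar_star s a + scalar_star s b"
  "scalar_star s (scalar_star s a) = a"
  "scalar_star s 0 = 0"
  by (cases s; simp add: scalar_star_def conjugate_dist_mul conjugate_dist_add)+

lemma scalar_star_sum: "scalar_star s (sum f S) = (\<Sum>x\<in>S. scalar_star s (f x))"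
  by (induct S rule: infinite_finite_induct) simp_all

lemma conjugate_one [simp]: "conjugate (1 :: 'a :: conjugatable_field) = 1"
proof -
  have "conjugate 1 * conjugate 1 = (conjugate 1 :: 'a)"
    by (metis conjugate_dist_mul mult_1)
  moreover have "conjugate 1 \<noteq> (0 :: 'a)"
    by simp
  ultimately show ?thesis
    by (metis mult_cancel_right2)
qed

lemma scalar_star_sign: "e \<in> {1, -1} \<Longrightarrow> scalar_star s e = e"
  by (cases s) (auto simp: scalar_star_def conjugate_neg)

lemma mat_star_eq_mat:
  "mat_star s A = mat (dim_col A) (dim_row A) (\<lambda>(i, j). scalar_star s (A $$ (j, i)))"
  by (cases s; rule eq_matI) (auto simp: mat_star_def mat_adjoint_def scalar_star_def mat_of_rows_index)

lemma mat_star_dims [simp]: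
  "dim_row (mat_star s A) = dim_col A" "dim_col (mat_star s A) = dim_row A"
  by (simp_all add: mat_star_eq_mat)

lemma mat_star_carrier_mat [simp]: "A \<in> carrier_mat n m \<Longrightarrow> mat_star s A \<in> carrier_mat m n"
  by auto

lemma mat_star_mat_star [simp]: "mat_star s (mat_star s A) = A"
  by (rule eq_matI) (auto simp: mat_star_eq_mat)

lemma mat_star_zero_mat [simp]: "mat_star s (0\<^sub>m n m) = 0\<^sub>m m n"
  by (rule eq_matI) (auto simp: mat_star_eq_mat scalar_star_def split: star_kind.split)

lemma mat_star_smult: "scalar_star s c = c \<Longrightarrow> mat_star s (c \<cdot>\<^sub>m A) = c \<cdot>\<^sub>m mat_star s A"
  by (rule eq_matI) (auto simp: mat_star_eq_mat)

lemma mat_star_add: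
  "dim_row A = dim_row B \<Longrightarrow> dim_col A = dim_col B \<Longrightarrow> mat_star s (A + B) = mat_star s A + mat_star s B"
  by (rule eq_matI) (auto simp: mat_star_eq_mat)

lemma mat_star_mult: "dim_col A = dim_row B \<Longrightarrow> mat_star s (A * B) = mat_star s B * mat_star s A"
  by (rule eq_matI) (auto simp: mat_star_eq_mat scalar_prod_def scalar_star_sum mult.commute intro!: sum.cong)

text \<open>
  Library versions with premises \<open>A \<in> carrier_mat nr nc\<close> are unusable as simp rules here,
  since \<open>nr, nc\<close> do not occur in the left-hand side; these variants take dimension equations.
\<close>

lemma mult_assoc_dim: "dim_col A = dim_row B \<Longrightarrow> dim_col B = dim_row C \<Longrightarrow> A * B * C = A * (B * C)"
  by (rule assoc_mult_mat[of A "dim_row A" "dim_col A" B "dim_col B" C "dim_col C"]) auto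

lemma mult_add_distrib_dim:
  "dim_col (A :: 'a :: semiring_0 mat) = dim_row B \<Longrightarrow> dim_row B = dim_row C \<Longrightarrow> dim_col B = dim_col C
    \<Longrightarrow> A * (B + C) = A * B + A * C"
  by (rule mult_add_distrib_mat[of A "dim_row A" "dim_col A" B "dim_col B"]) auto

lemma add_mult_distrib_dim:
  "dim_col (A :: 'a :: semiring_0 mat) = dim_row C \<Longrightarrow> dim_row A = dim_row B \<Longrightarrow> dim_col A = dim_col B
    \<Longrightarrow> (A + B) * C = A * C + B * C"
  by (rule add_mult_distrib_mat[of A "dim_row A" "dim_col A" B C "dim_col C"]) auto

lemma mult_smult_distrib_dim:
  "dim_col (A :: 'a :: comm_semiring_0 mat) = dim_row B \<Longrightarrow> A * (k \<cdot>\<^sub>m B) = k \<cdot>\<^sub>m (A * B)"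
  by (rule mult_smult_distrib[of A "dim_row A" "dim_col A" B "dim_col B"]) auto

lemma mult_smult_assoc_dim:
  "dim_col (A :: 'a :: comm_semiring_0 mat) = dim_row B \<Longrightarrow> (k \<cdot>\<^sub>m A) * B = k \<cdot>\<^sub>m (A * B)"
  by (rule mult_smult_assoc_mat[of A "dim_row A" "dim_col A" B "dim_col B"]) auto

lemma add_smult_distrib_left_dim:
  "dim_row A = dim_row B \<Longrightarrow> dim_col A = dim_col B \<Longrightarrow> k \<cdot>\<^sub>m (A + B) = (k :: 'a :: semiring) \<cdot>\<^sub>m A + k \<cdot>\<^sub>m B"
  by (rule eq_matI) (auto simp: distrib_left)

lemma smult_smult_mat [simp]: "a \<cdot>\<^sub>m (b \<cdot>\<^sub>m A) = (a * b :: 'a :: semigroup_mult) \<cdot>\<^sub>m A"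
  by (rule eq_matI) (auto simp: mult.assoc)

lemma one_smult_mat [simp]: "(1 :: 'a :: monoid_mult) \<cdot>\<^sub>m A = A"
  by (rule eq_matI) auto

lemmas mat_algebra_dim = mult_assoc_dim mult_add_distrib_dim add_mult_distrib_dim
  mult_smult_distrib_dim mult_smult_assoc_dim add_smult_distrib_left_dim mat_star_mult mat_star_add

lemma add_eq_zero_mat_rearrange:
  fixes A1 A2 B1 B2 C Y :: "'a :: ab_group_add mat"
  assumes carrier: "A1 \<in> carrier_mat n m" "A2 \<in> carrier_mat n m" "B1 \<in> carrier_mat n m"
      "B2 \<in> carrier_mat n m" "C \<in> carrier_mat n m" "Y \<in> carrier_mat n m"
    and A: "A1 + A2 + C = 0\<^sub>m n m" and B: "B1 + B2 + C = 0\<^sub>m n m"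
  shows "A1 + Y + A2 = Y + B1 + B2"
proof (rule eq_matI)
  fix i j assume ij: "i < dim_row (Y + B1 + B2)" "j < dim_col (Y + B1 + B2)"
  have "(A1 + A2 + C) $$ (i, j) = (B1 + B2 + C) $$ (i, j)"
    using A B by simp
  then have "A1 $$ (i, j) + A2 $$ (i, j) = B1 $$ (i, j) + B2 $$ (i, j)"
    using carrier ij by simp
  then show "(A1 + Y + A2) $$ (i, j) = (Y + B1 + B2) $$ (i, j)"
    using carrier ij by (simp add: ac_simps)
qed (use carrier in auto)

lemma quadratic_equations_intertwine:
  fixes A B C L R :: "'a :: comm_ring_1 mat"
  assumes carrier: "A \<in> carrier_mat p p" "B \<in> carrier_mat p p" "C \<in> carrier_mat p p"
      "L \<in> carrier_mat p p" "R \<in> carrier_mat p p"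
    and e: "e * e = 1"
    and right: "A * L * L + B * L + C = 0\<^sub>m p p"
    and left: "R * (R * A) + e \<cdot>\<^sub>m (R * B) + C = 0\<^sub>m p p"
  shows "(A * L + e \<cdot>\<^sub>m (R * A) + B) * L = (e \<cdot>\<^sub>m R) * (A * L + e \<cdot>\<^sub>m (R * A) + B)"
proof -
  have "(A * L + e \<cdot>\<^sub>m (R * A) + B) * L = A * L * L + e \<cdot>\<^sub>m (R * (A * L)) + B * L"
    using carrier by (simp add: mat_algebra_dim)
  also have "\<dots> = e \<cdot>\<^sub>m (R * (A * L)) + R * (R * A) + e \<cdot>\<^sub>m (R * B)"
    by (rule add_eq_zero_mat_rearrange[OF _ _ _ _ _ _ right left]) (use carrier in auto)
  also have "\<dots> = (e \<cdot>\<^sub>m R) * (A * L + e \<cdot>\<^sub>m (R * A) + B)"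
    using carrier by (simp add: mat_algebra_dim e)
  finally show ?thesis .
qed

lemma invariant_pair_projected:
  assumes "M \<in> carrier_mat n n" "D \<in> carrier_mat n n" "K \<in> carrier_mat n n"
    and "X \<in> carrier_mat n p" "L \<in> carrier_mat p p" "Y \<in> carrier_mat q n"
    and "invariant_pair M D K X L"
  shows "Y * M * X * L * L + Y * D * X * L + Y * K * X = 0\<^sub>m q p"
proof -
  have "Y * (M * X * (L * L) + D * X * L + K * X) = 0\<^sub>m q p"
    using assms by (simp add: invariant_pair_def)
  then show ?thesis
    using assms by (simp add: mat_algebra_dim)
qed

lemma mat_star_congruence:
  assumes "M \<in> carrier_mat n n" "X \<in> carrier_mat n p"
    and "mat_star s M = e \<cdot>\<^sub>m M" "scalar_star s e = e"
  shows "mat_star s (mat_star s X * M * X) = e \<cdot>\<^sub>m (mat_star s X * M * X)"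
  using assms by (simp add: mat_algebra_dim mat_star_smult)

lemma mat_star_quadratic_equation:
  fixes A B C L :: "'a :: conjugatable_field mat"
  assumes carrier: "A \<in> carrier_mat p p" "B \<in> carrier_mat p p" "C \<in> carrier_mat p p"
      "L \<in> carrier_mat p p"
    and e: "scalar_star s e1 = e1" "scalar_star s e2 = e2" "e1 * e1 = 1"
    and star: "mat_star s A = e1 \<cdot>\<^sub>m A" "mat_star s B = e2 \<cdot>\<^sub>m B" "mat_star s C = e1 \<cdot>\<^sub>m C"
    and eq: "A * L * L + B * L + C = 0\<^sub>m p p"
  shows "mat_star s L * (mat_star s L * A) + (e1 * e2) \<cdot>\<^sub>m (mat_star s L * B) + C = 0\<^sub>m p p"
proof -
  have "e1 \<cdot>\<^sub>m mat_star s (A * L * L + B * L + C)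
      = mat_star s L * (mat_star s L * A) + (e1 * e2) \<cdot>\<^sub>m (mat_star s L * B) + C"
    using carrier by (simp add: mat_algebra_dim star mult.assoc[symmetric] e)
  then show ?thesis
    using eq by simp
qed

lemma invariant_pair_sylvester_equation:
  fixes M D K X L :: "'a :: conjugatable_field mat"
  assumes e: "e1 \<in> {1, -1}" "e2 \<in> {1, -1}"
    and carrier: "M \<in> carrier_mat n n" "D \<in> carrier_mat n n" "K \<in> carrier_mat n n"
      "X \<in> carrier_mat n p" "L \<in> carrier_mat p p"
    and star: "mat_star s M = e1 \<cdot>\<^sub>m M" "mat_star s D = e2 \<cdot>\<^sub>m D" "mat_star s K = e1 \<cdot>\<^sub>m K"
    and inv: "invariant_pair M D K X L"
  defines "W \<equiv> mat_star s X * M * X * L + (e1 * e2) \<cdot>\<^sub>m (mat_star s L * mat_star s X * M * X)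
      + mat_star s X * D * X"
  shows "W * L = ((e1 * e2) \<cdot>\<^sub>m mat_star s L) * W"
proof -
  define A B C where "A = mat_star s X * M * X" and "B = mat_star s X * D * X"
    and "C = mat_star s X * K * X"
  have ABC: "A \<in> carrier_mat p p" "B \<in> carrier_mat p p" "C \<in> carrier_mat p p"
    using carrier by (auto simp: A_def B_def C_def)
  have e_star: "scalar_star s e1 = e1" "scalar_star s e2 = e2"
    using e by (simp_all add: scalar_star_sign)
  have e_sq: "e1 * e1 = 1" "(e1 * e2) * (e1 * e2) = 1"
    using e by auto
  have right: "A * L * L + B * L + C = 0\<^sub>m p p"
    unfolding A_def B_def C_def
    by (rule invariant_pair_projected[OF carrier _ inv]) (use carrier in simp)
  have "mat_star s A = e1 \<cdot>\<^sub>m A" "mat_star s B = e2 \<cdot>\<^sub>m B" "mat_star s C = e1 \<cdot>\<^sub>m C"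
    using mat_star_congruence carrier star e_star by (auto simp: A_def B_def C_def)
  then have left: "mat_star s L * (mat_star s L * A) + (e1 * e2) \<cdot>\<^sub>m (mat_star s L * B) + C = 0\<^sub>m p p"
    using mat_star_quadratic_equation ABC carrier e_star e_sq right by blast
  have "W = A * L + (e1 * e2) \<cdot>\<^sub>m (mat_star s L * A) + B"
    using carrier by (simp add: W_def A_def B_def mat_algebra_dim)
  then show ?thesis
    using quadratic_equations_intertwine[OF ABC carrier(5) _ e_sq(2) right left] carrier by simp
qed

lemma mult_upper_triangular_entry:
  fixes V T :: "'a :: semiring_0 mat"
  assumes V: "V \<in> carrier_mat q p" and T: "T \<in> carrier_mat p p" "upper_triangular T"
    and ij: "i < q" "j < p" and left_zero: "\<And>k. k < j \<Longrightarrow> V $$ (i, k) = 0"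
  shows "(V * T) $$ (i, j) = V $$ (i, j) * T $$ (j, j)"
proof -
  have "(V * T) $$ (i, j) = (\<Sum>k\<in>{0..<p}. V $$ (i, k) * T $$ (k, j))"
    using V T ij by (simp add: scalar_prod_def)
  also have "\<dots> = (\<Sum>k\<in>{j}. V $$ (i, k) * T $$ (k, j))"
  proof (rule sum.mono_neutral_right)
    show "\<forall>k\<in>{0..<p} - {j}. V $$ (i, k) * T $$ (k, j) = 0"
      using left_zero T ij by (metis DiffE atLeastLessThan_iff carrier_matD(1) linorder_neqE_nat
          mult_not_zero singletonI upper_triangularD)
  qed (use ij in auto)
  finally show ?thesis
    by simp
qed

lemma upper_triangular_intertwiner_eq_zero:
  fixes A V T :: "'a :: field mat"
  assumes A: "A \<in> carrier_mat q q" and V: "V \<in> carrier_mat q p" and T: "T \<in> carrier_mat p p"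
    and ut: "upper_triangular T" and intertwine: "V * T = A * V"
    and not_eigenvalue: "\<And>j. j < p \<Longrightarrow> \<not> eigenvalue A (T $$ (j, j))"
  shows "V = 0\<^sub>m q p"
proof -
  have "col V j = 0\<^sub>v q" if "j < p" for j
    using that
  proof (induction j rule: less_induct)
    case (less j)
    have "A *\<^sub>v col V j = col (A * V) j"
      by (rule col_mult2[OF A V less.prems, symmetric])
    also have "\<dots> = col (V * T) j"
      by (simp add: intertwine)
    also have "\<dots> = T $$ (j, j) \<cdot>\<^sub>v col V j"
    proof (rule eq_vecI)
      fix i assume "i < dim_vec (T $$ (j, j) \<cdot>\<^sub>v col V j)"
      then have i: "i < q"
        using V by simp
      have "V $$ (i, k) = 0" if "k < j" for k
      proof -
        have "col V k $ i = 0"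
          using less.IH[OF that] that less.prems i by simp
        then show ?thesis
          using V i that less.prems by simp
      qed
      then show "col (V * T) j $ i = (T $$ (j, j) \<cdot>\<^sub>v col V j) $ i"
        using mult_upper_triangular_entry[OF V T ut i less.prems] V T i less.prems by simp
    qed (use V T in simp)
    finally have "A *\<^sub>v col V j = T $$ (j, j) \<cdot>\<^sub>v col V j" .
    moreover have "col V j \<in> carrier_vec q"
      using V by auto
    ultimately show ?case
      using not_eigenvalue[OF less.prems] A
      unfolding eigenvalue_def eigenvector_def by auto
  qed
  then show ?thesis
    using V by (intro mat_col_eqI) auto
qed

lemma similar_upper_triangular_diag_eigenvalue:
  fixes B T :: "'a :: field mat"
  assumes B: "B \<in> carrier_mat p p" and T: "T \<in> carrier_mat p p" "upper_triangular T"
    and sim: "similar_mat B T" and j: "j < p"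
  shows "eigenvalue B (T $$ (j, j))"
proof -
  have "char_poly B = (\<Prod>a\<leftarrow>diag_mat T. [:- a, 1:])"
    using char_poly_similar[OF sim] char_poly_upper_triangular[OF T] by simp
  moreover have "T $$ (j, j) \<in> set (diag_mat T)"
    using j T unfolding diag_mat_def by auto
  ultimately have "poly (char_poly B) (T $$ (j, j)) = 0"
    by (simp add: poly_prod_list prod_list_zero_iff)
  then show ?thesis
    using eigenvalue_root_char_poly[OF B] by simp
qed

lemma sylvester_homogeneous_eq_zero:
  fixes A B W :: "complex mat"
  assumes A: "A \<in> carrier_mat q q" and B: "B \<in> carrier_mat p p" and W: "W \<in> carrier_mat q p"
    and intertwine: "W * B = A * W" and disjoint: "spectrum A \<inter> spectrum B = {}"
  shows "W = 0\<^sub>m q p"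
proof -
  obtain es where "char_poly B = (\<Prod>a\<leftarrow>es. [:- a, 1:])"
    using char_poly_factorized[OF B] by blast
  then obtain T where T: "T \<in> carrier_mat p p" "upper_triangular T" and sim: "similar_mat B T"
    using schur_decomposition_exists[OF B] by blast
  then obtain P Q where PQ: "P \<in> carrier_mat p p" "Q \<in> carrier_mat p p"
    "P * Q = 1\<^sub>m p" "Q * P = 1\<^sub>m p" and BPTQ: "B = P * T * Q"
    using similar_matD[OF sim] B by auto
  have "W * P * T = A * (W * P)"
  proof -
    have "W * P * T = W * (P * T * Q) * P"
      using W T PQ by (simp add: mult_assoc_dim)
    also have "\<dots> = A * (W * P)"
      using A W PQ by (simp add: BPTQ[symmetric] intertwine mult_assoc_dim)
    finally show ?thesis .
  qed
  moreover have "\<not> eigenvalue A (T $$ (j, j))" if "j < p" for j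
    using similar_upper_triangular_diag_eigenvalue[OF B T sim that] disjoint
    unfolding spectrum_def by auto
  ultimately have "W * P = 0\<^sub>m q p"
    using upper_triangular_intertwiner_eq_zero[OF A _ T] W PQ by simp
  then have "W * P * Q = 0\<^sub>m q p"
    using PQ by simp
  then show ?thesis
    using W PQ by (simp add: mult_assoc_dim)
qed

lemma sylvester_homogeneous_eq_zero_real:
  fixes A B W :: "real mat"
  assumes A: "A \<in> carrier_mat q q" and B: "B \<in> carrier_mat p p" and W: "W \<in> carrier_mat q p"
    and intertwine: "W * B = A * W"
    and disjoint: "spectrum (map_mat complex_of_real A) \<inter> spectrum (map_mat complex_of_real B) = {}"
  shows "W = 0\<^sub>m q p"
proof -
  have "map_mat complex_of_real W * map_mat complex_of_real B
      = map_mat complex_of_real A * map_mat complex_of_real W"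
    using A B W by (simp add: of_real_hom.mat_hom_mult[symmetric] intertwine)
  from sylvester_homogeneous_eq_zero[OF _ _ _ this disjoint]
  have "map_mat complex_of_real W = 0\<^sub>m q p"
    using A B W by simp
  then show ?thesis
    using W unfolding mat_eq_iff by auto
qed

theorem corollary2p4:
  shows
  "(\<forall>(s::star_kind) (e1::complex) (e2::complex) n p (M::complex mat) D K X L.
      e1 \<in> {1, -1} \<longrightarrow> e2 \<in> {1, -1} \<longrightarrow>
      M \<in> carrier_mat n n \<longrightarrow> D \<in> carrier_mat n n \<longrightarrow> K \<in> carrier_mat n n \<longrightarrow>
      X \<in> carrier_mat n p \<longrightarrow> L \<in> carrier_mat p p \<longrightarrow>
      mat_star s M = e1 \<cdot>\<^sub>m M \<longrightarrow> mat_star s D = e2 \<cdot>\<^sub>m D \<longrightarrow> mat_star s K = e1 \<cdot>\<^sub>m K \<longrightarrow>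
      invariant_pair M D K X L \<longrightarrow>
      spectrum ((e1 * e2) \<cdot>\<^sub>m mat_star s L) \<inter> spectrum L = {} \<longrightarrow>
      mat_star s X * M * X * L + (e1 * e2) \<cdot>\<^sub>m (mat_star s L * mat_star s X * M * X)
        + mat_star s X * D * X = 0\<^sub>m p p)
   \<and>
   (\<forall>(s::star_kind) (e1::real) (e2::real) n p (M::real mat) D K X L.
      e1 \<in> {1, -1} \<longrightarrow> e2 \<in> {1, -1} \<longrightarrow>
      M \<in> carrier_mat n n \<longrightarrow> D \<in> carrier_mat n n \<longrightarrow> K \<in> carrier_mat n n \<longrightarrow>
      X \<in> carrier_mat n p \<longrightarrow> L \<in> carrier_mat p p \<longrightarrow>
      mat_star s M = e1 \<cdot>\<^sub>m M \<longrightarrow> mat_star s D = e2 \<cdot>\<^sub>m D \<longrightarrow> mat_star s K = e1 \<cdot>\<^sub>m K \<longrightarrow>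
      invariant_pair M D K X L \<longrightarrow>
      spectrum (map_mat complex_of_real ((e1 * e2) \<cdot>\<^sub>m mat_star s L))
        \<inter> spectrum (map_mat complex_of_real L) = {} \<longrightarrow>
      mat_star s X * M * X * L + (e1 * e2) \<cdot>\<^sub>m (mat_star s L * mat_star s X * M * X)
        + mat_star s X * D * X = 0\<^sub>m p p)"
proof (intro conjI allI impI)
  fix s and e1 e2 :: complex and n p and M D K X L :: "complex mat"
  assume signs: "e1 \<in> {1, -1}" "e2 \<in> {1, -1}"
    and carrier: "M \<in> carrier_mat n n" "D \<in> carrier_mat n n" "K \<in> carrier_mat n n"
      "X \<in> carrier_mat n p" "L \<in> carrier_mat p p"
    and star: "mat_star s M = e1 \<cdot>\<^sub>m M" "mat_star s D = e2 \<cdot>\<^sub>m D" "mat_star s K = e1 \<cdot>\<^sub>m K"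
    and inv: "invariant_pair M D K X L"
    and disjoint: "spectrum ((e1 * e2) \<cdot>\<^sub>m mat_star s L) \<inter> spectrum L = {}"
  note sylvester_equation = invariant_pair_sylvester_equation[OF signs carrier star inv]
  show "mat_star s X * M * X * L + (e1 * e2) \<cdot>\<^sub>m (mat_star s L * mat_star s X * M * X)
      + mat_star s X * D * X = 0\<^sub>m p p"
    by (rule sylvester_homogeneous_eq_zero[OF _ _ _ sylvester_equation disjoint])
      (use carrier in auto)
next
  fix s and e1 e2 :: real and n p and M D K X L :: "real mat"
  assume signs: "e1 \<in> {1, -1}" "e2 \<in> {1, -1}"
    and carrier: "M \<in> carrier_mat n n" "D \<in> carrier_mat n n" "K \<in> carrier_mat n n"
      "X \<in> carrier_mat n p" "L \<in> carrier_mat p p"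
    and star: "mat_star s M = e1 \<cdot>\<^sub>m M" "mat_star s D = e2 \<cdot>\<^sub>m D" "mat_star s K = e1 \<cdot>\<^sub>m K"
    and inv: "invariant_pair M D K X L"
    and disjoint: "spectrum (map_mat complex_of_real ((e1 * e2) \<cdot>\<^sub>m mat_star s L))
      \<inter> spectrum (map_mat complex_of_real L) = {}"
  note sylvester_equation = invariant_pair_sylvester_equation[OF signs carrier star inv]
  show "mat_star s X * M * X * L + (e1 * e2) \<cdot>\<^sub>m (mat_star s L * mat_star s X * M * X)
      + mat_star s X * D * X = 0\<^sub>m p p"
    by (rule sylvester_homogeneous_eq_zero_real[OF _ _ _ sylvester_equation disjoint])
      (use carrier in auto)
qed

end
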